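(* Let $(Q,\Sigma,\Psi)$ be a HMM. For any $\pi_1,\pi_2\in\mathbb{R}^{|Q|}$ we have $\pi_1\equiv\pi_2$ if and only if $\pi_1-\pi_2$ is orthogonal to $\mathrm{Span}\{\Psi(w)\mathbbm{1}^T\mid w\in\Sigma^*\}$.
   Context: Let $(\Sigma,\mathscr{G},\lambda)$ be a measure space where $\Sigma$ is a topological space and every open subset of $\Sigma$ belongs to $\mathscr{G}$ and has positive measure. A HMM is a triple $(Q,\Sigma,\Psi)$ with $Q$ a finite set and $\Psi:\Sigma\to[0,\infty)^{|Q|\times|Q|}$ a piecewise continuous measurable function such that the entrywise integral $\int_\Sigma\Psi\,d\lambda$ is stochastic. $\Psi$ is piecewise continuous if there is an open $C\subseteq\Sigma$ on which $\Psi$ is continuous such that each $x\in\Sigma\setminus C$ is the limit of some sequence $x_n\in C$ with $\Psi(x_n)\to\Psi(x)$. $\Psi$ is extended to finite words by $\Psi(x_1\cdots x_n)=\Psi(x_1)\cdots\Psi(x_n)$ (the empty word giving the identity), $\Sigma^*$ is the set of finite words, $\mathbbm{1}=(1,\dots,1)$, and $\lambda^n$ is the product measure on $\Sigma^n$ with product $\sigma$-algebra $\mathscr{G}^n$. For a row vector $\pi$, $\mathbb{P}_\pi$ is the (for initial distributions: unique probability) measure on $\Sigma^\omega$ determined by $\mathbb{P}_\pi(A\Sigma^\omega)=\pi\left(\int_A\Psi\,d\lambda^n\right)\mathbbm{1}^T$ for cylinder sets $A=A_1\times\dots\times A_n$, $A_i\in\mathscr{G}$, where $A\Sigma^\omega$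 is the set of infinite words whose first $n$ letters lie in $A$. $\pi_1\equiv\pi_2$ means $\mathbb{P}_{\pi_1}(A)=\mathbb{P}_{\pi_2}(A)$ for all measurable $A\subseteq\Sigma^\omega$ (equivalently, $\pi_1\int_E\Psi\,d\lambda^n\mathbbm{1}^T=\pi_2\int_E\Psi\,d\lambda^n\mathbbm{1}^T$ for all $n$ and all $E\in\mathscr{G}^n$). *)

theory Defs
  imports "HOL-Analysis.Analysis" "HOL-Probability.Probability"
begin

fun psi_word :: "('a \<Rightarrow> real^'q^'q) \<Rightarrow> 'a list \<Rightarrow> real^'q^'q" where
  "psi_word \<Psi> [] = mat 1"
| "psi_word \<Psi> (x # xs) = \<Psi> x ** psi_word \<Psi> xs"

definition ones :: "real^'q" where "ones = (\<chi> i. 1)"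

definition piecewise_continuous :: "('a::topological_space \<Rightarrow> 'b::topological_space) \<Rightarrow> bool" where
  "piecewise_continuous \<Psi> \<longleftrightarrow>
     (\<exists>C. open C \<and> continuous_on C \<Psi> \<and>
        (\<forall>x. x \<notin> C \<longrightarrow> (\<exists>s::nat \<Rightarrow> 'a. (\<forall>n. s n \<in> C) \<and> s \<longlonglongrightarrow> x \<and> (\<lambda>n. \<Psi> (s n)) \<longlonglongrightarrow> \<Psi> x)))"

definition admissible_space :: "'a::topological_space measure \<Rightarrow> bool" where
  "admissible_space M \<longleftrightarrow> space M = UNIV \<and>
     (\<forall>U. open U \<longrightarrow> U \<in> sets M \<and> (U \<noteq> {} \<longrightarrow> emeasure M U > 0))"

definition mat_integral :: "'b measure \<Rightarrow> ('b \<Rightarrow> real^'q^'q) \<Rightarrow> real^'q^'q" where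
  "mat_integral M F = (\<chi> i j. integral\<^sup>L M (\<lambda>x. F x $ i $ j))"

definition is_HMM :: "'a::topological_space measure \<Rightarrow> ('a \<Rightarrow> real^'q::finite^'q) \<Rightarrow> bool" where
  "is_HMM M \<Psi> \<longleftrightarrow> admissible_space M \<and>
     \<Psi> \<in> borel_measurable M \<and>
     (\<forall>x i j. 0 \<le> \<Psi> x $ i $ j) \<and>
     piecewise_continuous \<Psi> \<and>
     (\<forall>i j. integrable M (\<lambda>x. \<Psi> x $ i $ j)) \<and>
     (\<forall>i. (\<Sum>j\<in>UNIV. mat_integral M \<Psi> $ i $ j) = 1)"

text \<open>n-fold product measure \<lambda>^n on \<Sigma>^n (words as functions on {..<n}).\<close>
abbreviation prod_meas :: "'a measure \<Rightarrow> nat \<Rightarrow> (nat \<Rightarrow> 'a) measure" where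
  "prod_meas M n \<equiv> PiM {..<n} (\<lambda>_. M)"

definition word_integral :: "'a measure \<Rightarrow> ('a \<Rightarrow> real^'q^'q) \<Rightarrow> nat \<Rightarrow> (nat \<Rightarrow> 'a) set \<Rightarrow> real^'q^'q" where
  "word_integral M \<Psi> n E =
     (\<chi> i j. set_lebesgue_integral (prod_meas M n) E (\<lambda>w. psi_word \<Psi> (map w [0..<n]) $ i $ j))"

definition hmm_equiv :: "'a measure \<Rightarrow> ('a \<Rightarrow> real^'q^'q) \<Rightarrow> real^'q \<Rightarrow> real^'q \<Rightarrow> bool" where
  "hmm_equiv M \<Psi> \<pi>1 \<pi>2 \<longleftrightarrow>
     (\<forall>n. \<forall>E \<in> sets (prod_meas M n).
        (\<pi>1 v* word_integral M \<Psi> n E) \<bullet> ones = (\<pi>2 v* word_integral M \<Psi> n E) \<bullet> ones)"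

end

theory Submission
  imports Defs
begin

(* If pi1 - pi2 annihilates every vector Psi(w) 1^T, the integrands (pi1 - pi2) Psi(w) 1^T in the
   definition of equivalence vanish identically.  Conversely, suppose some word w has
   (pi1 - pi2) Psi(w) 1^T > 0.  Piecewise continuity lets each letter of w be replaced by a
   point of continuity of Psi without losing positivity, and continuity there yields nonempty open
   sets U_1, ..., U_n on whose product the integrand stays positive.  Every nonempty open set has
   positive measure, hence so does U_1 x ... x U_n, and the integral over it is nonzero.
   The measure lambda need not be sigma-finite, so the library's formulas for product measures do
   not apply; the measure of rectangles and the integrals of products under lambda^n are derived
   directly from the Caratheodory construction of the product measure. *)

section \<open>Products of a measure that need not be \<open>\<sigma>\<close>-finite\<close>

lemma suminf_prod_emeasure_eq:
  fixes A :: "nat \<Rightarrow> nat \<Rightarrow> 'a set" and B :: "nat \<Rightarrow> 'a set" and c :: "nat \<Rightarrow> ennreal"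
  assumes A: "\<And>k i. A k i \<in> sets M" and B: "\<And>i. B i \<in> sets M"
    and eq: "\<And>x. (\<Sum>k. c k * (\<Prod>i<n. indicator (A k i) (x i))) = d * (\<Prod>i<n. indicator (B i) (x i))"
  shows "(\<Sum>k. c k * (\<Prod>i<n. emeasure M (A k i))) = d * (\<Prod>i<n. emeasure M (B i))"
  using eq
proof (induction n arbitrary: c d)
  case 0
  then show ?case by simp
next
  case (Suc n)
  \<comment> \<open>Freeze the last coordinate at \<open>t\<close>, apply the induction hypothesis, then integrate over \<open>t\<close>.\<close>
  have frozen: "(\<Sum>k. c k * indicator (A k n) t * (\<Prod>i<n. emeasure M (A k i)))
      = d * indicator (B n) t * (\<Prod>i<n. emeasure M (B i))" for t
  proof (rule Suc.IH)
    fix x :: "nat \<Rightarrow> 'a"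
    have "(\<Prod>i<n. indicator (E i) ((x(n := t)) i)) = (\<Prod>i<n. indicator (E i) (x i) :: ennreal)"
      for E :: "nat \<Rightarrow> 'a set"
      by (rule prod.cong) auto
    with Suc.prems[of "x(n := t)"]
    show "(\<Sum>k. c k * indicator (A k n) t * (\<Prod>i<n. indicator (A k i) (x i))) =
          d * indicator (B n) t * (\<Prod>i<n. indicator (B i) (x i))"
      by (simp add: ac_simps)
  qed
  have "(\<Sum>k. c k * (\<Prod>i<Suc n. emeasure M (A k i)))
      = (\<Sum>k. \<integral>\<^sup>+ t. c k * (\<Prod>i<n. emeasure M (A k i)) * indicator (A k n) t \<partial>M)"
    by (simp only: nn_integral_cmult_indicator[OF A]) (simp add: ac_simps)
  also have "\<dots> = \<integral>\<^sup>+ t. (\<Sum>k. c k * (\<Prod>i<n. emeasure M (A k i)) * indicator (A k n) t) \<partial>M"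
    using A by (intro nn_integral_suminf[symmetric]) auto
  also have "\<dots> = \<integral>\<^sup>+ t. d * (\<Prod>i<n. emeasure M (B i)) * indicator (B n) t \<partial>M"
    using frozen by (simp add: ac_simps)
  also have "\<dots> = d * (\<Prod>i<Suc n. emeasure M (B i))"
    by (simp only: nn_integral_cmult_indicator[OF B]) (simp add: ac_simps)
  finally show ?case .
qed

definition PiE_diff_piece :: "nat \<Rightarrow> (nat \<Rightarrow> 'a set) \<Rightarrow> (nat \<Rightarrow> 'a set) \<Rightarrow> nat \<Rightarrow> (nat \<Rightarrow> 'a) set" where
  "PiE_diff_piece n A B j =
     PiE {..<n} (\<lambda>i. if i < j then A i \<inter> B i else if i = j then A i - B i else A i)"

lemma PiE_diff_piece_coord:
  assumes "x \<in> PiE_diff_piece n A B j" and "i < n"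
  shows "x i \<in> (if i < j then A i \<inter> B i else if i = j then A i - B i else A i)"
  using assms unfolding PiE_diff_piece_def PiE_iff by blast

lemma disjoint_family_on_PiE_diff_piece:
  "disjoint_family_on (PiE_diff_piece n A B) {..<n}"
proof -
  have "PiE_diff_piece n A B j \<inter> PiE_diff_piece n A B j' = {}" if "j < j'" "j' < n" for j j'
  proof -
    have "x j \<notin> B j" "x j \<in> B j" if "x \<in> PiE_diff_piece n A B j" "x \<in> PiE_diff_piece n A B j'" for x
      using PiE_diff_piece_coord[OF that(1), of j] PiE_diff_piece_coord[OF that(2), of j]
        \<open>j < j'\<close> \<open>j' < n\<close> by auto
    then show ?thesis by blast
  qed
  then show ?thesis
    unfolding disjoint_family_on_def by (metis Int_commute lessThan_iff linorder_neqE_nat)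
qed

lemma PiE_diff_eq_UN_PiE_diff_piece:
  "PiE {..<n} A - PiE {..<n} B = (\<Union>j<n. PiE_diff_piece n A B j)"
proof
  show "(\<Union>j<n. PiE_diff_piece n A B j) \<subseteq> PiE {..<n} A - PiE {..<n} B"
  proof clarify
    fix j x assume "j < n" and x: "x \<in> PiE_diff_piece n A B j"
    have "x i \<in> A i" if "i < n" for i
      using PiE_diff_piece_coord[OF x that] by (auto split: if_splits)
    moreover have "x j \<notin> B j"
      using PiE_diff_piece_coord[OF x \<open>j < n\<close>] by simp
    moreover have "x \<in> extensional {..<n}"
      using x by (simp add: PiE_diff_piece_def PiE_def)
    ultimately show "x \<in> PiE {..<n} A - PiE {..<n} B"
      using \<open>j < n\<close> by (auto simp: PiE_iff)
  qed
  show "PiE {..<n} A - PiE {..<n} B \<subseteq> (\<Union>j<n. PiE_diff_piece n A B j)"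
  proof
    fix x assume x: "x \<in> PiE {..<n} A - PiE {..<n} B"
    then have ex: "\<exists>i. i < n \<and> x i \<notin> B i"
      by (auto simp: PiE_iff)
    define j where "j = (LEAST i. i < n \<and> x i \<notin> B i)"
    have j: "j < n" "x j \<notin> B j"
      using LeastI_ex[OF ex] unfolding j_def by auto
    have "x i \<in> B i" if "i < j" for i
      using not_less_Least[of i "\<lambda>i. i < n \<and> x i \<notin> B i"] that j unfolding j_def by auto
    with x j have "x \<in> PiE_diff_piece n A B j"
      unfolding PiE_diff_piece_def by (auto simp: PiE_iff)
    with j show "x \<in> (\<Union>j<n. PiE_diff_piece n A B j)" by auto
  qed
qed

definition rectangles :: "'a measure \<Rightarrow> nat \<Rightarrow> (nat \<Rightarrow> 'a) set set" where
  "rectangles M n = {PiE {..<n} A | A. \<forall>i<n. A i \<in> sets M}"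

lemma semiring_of_sets_rectangles:
  assumes "0 < n"
  shows "semiring_of_sets (PiE {..<n} (\<lambda>_. space M)) (rectangles M n)"
proof
  have "PiE {..<n} A \<subseteq> PiE {..<n} (\<lambda>_. space M)" if "\<forall>i<n. A i \<in> sets M" for A
    using that by (intro PiE_mono) (simp add: sets.sets_into_space)
  then show "rectangles M n \<subseteq> Pow (PiE {..<n} (\<lambda>_. space M))"
    unfolding rectangles_def by blast
  have "PiE {..<n} (\<lambda>_. {}) = {}"
    using assms by (auto simp: PiE_eq_empty_iff)
  then show "{} \<in> rectangles M n"
    unfolding rectangles_def by (intro CollectI exI[of _ "\<lambda>_. {}"]) auto
  fix a b assume "a \<in> rectangles M n" "b \<in> rectangles M n"
  then obtain A B where a: "a = PiE {..<n} A" and A: "\<forall>i<n. A i \<in> sets M"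
    and b: "b = PiE {..<n} B" and B: "\<forall>i<n. B i \<in> sets M"
    by (auto simp: rectangles_def)
  show "a \<inter> b \<in> rectangles M n"
    using A B unfolding a b rectangles_def by (auto simp: PiE_Int intro!: exI[of _ "\<lambda>i. A i \<inter> B i"])
  have "PiE_diff_piece n A B j \<in> rectangles M n" for j
    unfolding PiE_diff_piece_def rectangles_def
    by (rule CollectI, rule exI, rule conjI[OF refl]) (use A B in auto)
  then show "\<exists>C\<subseteq>rectangles M n. finite C \<and> disjoint C \<and> a - b = \<Union>C"
    unfolding a b PiE_diff_eq_UN_PiE_diff_piece
    by (intro exI[of _ "PiE_diff_piece n A B ` {..<n}"] conjI disjoint_family_on_disjoint_image
        disjoint_family_on_PiE_diff_piece) auto
qed

lemma indicator_PiE_restrict: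
  assumes "finite I"
  shows "indicator (PiE I F) (restrict x I) = (\<Prod>i\<in>I. indicator (F i) (x i) :: 'b::comm_semiring_1)"
proof (cases "\<forall>i\<in>I. x i \<in> F i")
  case True
  then show ?thesis by (simp add: PiE_iff)
next
  case False
  then obtain i where "i \<in> I" "x i \<notin> F i" by blast
  then have "restrict x I \<notin> PiE I F" "indicator (F i) (x i) = (0::'b)"
    by auto
  with assms \<open>i \<in> I\<close> show ?thesis
    by (metis indicator_simps(2) prod_zero)
qed

lemma suminf_emeasure_rectangles:
  fixes n :: nat and F :: "nat \<Rightarrow> nat \<Rightarrow> 'a set"
  assumes F: "\<And>m i. F m i \<in> sets M" and B: "\<And>i. B i \<in> sets M"
    and disj: "disjoint_family (\<lambda>m. PiE {..<n} (F m))"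
    and union: "(\<Union>m. PiE {..<n} (F m)) = PiE {..<n} B"
  shows "(\<Sum>m. \<Prod>i<n. emeasure M (F m i)) = (\<Prod>i<n. emeasure M (B i))"
proof -
  have "(\<Sum>m. 1 * (\<Prod>i<n. emeasure M (F m i))) = 1 * (\<Prod>i<n. emeasure M (B i))"
  proof (rule suminf_prod_emeasure_eq[OF F B])
    fix x :: "nat \<Rightarrow> 'a"
    let ?x = "restrict x {..<n}"
    have "(\<Sum>m. 1 * (\<Prod>i<n. indicator (F m i) (x i))) = (\<Sum>m. indicator (PiE {..<n} (F m)) ?x :: ennreal)"
      by (simp add: indicator_PiE_restrict)
    also have "\<dots> = indicator (PiE {..<n} B) ?x"
      by (simp only: suminf_indicator[OF disj] union)
    also have "\<dots> = 1 * (\<Prod>i<n. indicator (B i) (x i))"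
      by (simp add: indicator_PiE_restrict)
    finally show "(\<Sum>m. 1 * (\<Prod>i<n. indicator (F m i) (x i))) = 1 * (\<Prod>i<n. indicator (B i) (x i) :: ennreal)" .
  qed
  then show ?thesis by simp
qed

lemma prod_emeasure_eq_0_if_PiE_empty:
  fixes n :: nat
  assumes "PiE {..<n} A = {}"
  shows "(\<Prod>i<n. emeasure M (A i)) = 0"
proof -
  obtain i where "i < n" "A i = {}"
    using assms unfolding PiE_eq_empty_iff by blast
  then show ?thesis
    by (intro prod_zero bexI[of _ i]) auto
qed

lemma prod_emeasure_cong_PiE:
  fixes n :: nat
  assumes eq: "PiE {..<n} A = PiE {..<n} B"
  shows "(\<Prod>i<n. emeasure M (A i)) = (\<Prod>i<n. emeasure M (B i))"
proof (cases "PiE {..<n} A = {}")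
  case True
  with eq show ?thesis
    by (simp add: prod_emeasure_eq_0_if_PiE_empty)
next
  case False
  with eq have "\<forall>i\<in>{..<n}. A i = B i"
    unfolding PiE_eq_iff PiE_eq_empty_iff by blast
  then show ?thesis
    by simp
qed

text \<open>The generators and the premeasure from the definition of \<^const>\<open>PiM\<close>, in terms of rectangles.\<close>

lemma PiM_generator_eq_PiE:
  assumes "J \<subseteq> I" and "X \<in> (\<Pi> j\<in>J. sets M)"
  shows "prod_emb I (\<lambda>_. M) J (PiE J X) = PiE I (\<lambda>i. if i \<in> J then X i else space M)"
  using assms by (intro prod_emb_PiE) (auto simp: Pi_iff dest: sets.sets_into_space)

lemma PiM_premeasure_eq_prod:
  fixes n :: nat
  assumes "J \<subseteq> {..<n}"
  shows "(\<Prod>j\<in>J \<union> {i\<in>{..<n}. emeasure M (space M) \<noteq> 1}.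
            if j \<in> J then emeasure M (X j) else emeasure M (space M))
       = (\<Prod>i<n. emeasure M (if i \<in> J then X i else space M))"
proof (cases "emeasure M (space M) = 1")
  case True
  with assms show ?thesis
    by (intro prod.mono_neutral_cong_left) auto
next
  case False
  with assms have "J \<union> {i\<in>{..<n}. emeasure M (space M) \<noteq> 1} = {..<n}"
    by auto
  then show ?thesis
    by (simp add: if_distrib)
qed

lemma rectangles_eq_PiM_generators:
  fixes n :: nat
  assumes "0 < n"
  shows "rectangles M n = {prod_emb {..<n} (\<lambda>_. M) J (PiE J X) | J X.
      (J \<noteq> {} \<or> {..<n} = ({} :: nat set)) \<and> finite J \<and> J \<subseteq> {..<n} \<and> X \<in> (\<Pi> j\<in>J. sets M)}"
    (is "_ = {?G J X | J X. ?P J X}")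
proof (intro equalityI subsetI)
  fix r assume "r \<in> rectangles M n"
  then obtain B where r: "r = PiE {..<n} B" and B: "\<forall>i<n. B i \<in> sets M"
    by (auto simp: rectangles_def)
  have "?P {..<n} B"
    using assms B by auto
  moreover have "?G {..<n} B = r"
    unfolding r using B sets.sets_into_space by (intro prod_emb_PiE_same_index) auto
  ultimately show "r \<in> {?G J X | J X. ?P J X}" by blast
next
  fix r assume "r \<in> {?G J X | J X. ?P J X}"
  then obtain J X where r: "r = ?G J X" and J: "J \<subseteq> {..<n}" and X: "X \<in> (\<Pi> j\<in>J. sets M)"
    by blast
  show "r \<in> rectangles M n"
    unfolding rectangles_def r PiM_generator_eq_PiE[OF J X]
    by (intro CollectI exI[of _ "\<lambda>i. if i \<in> J then X i else space M"]) (use X in auto)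
qed

lemma emeasure_PiM_PiE:
  fixes n :: nat
  assumes A: "\<And>i. i < n \<Longrightarrow> A i \<in> sets M"
  shows "emeasure (PiM {..<n} (\<lambda>_. M)) (PiE {..<n} A) = (\<Prod>i<n. emeasure M (A i))"
proof (cases "n = 0")
  case True
  then show ?thesis by simp
next
  case False
  let ?G = "\<lambda>J X. prod_emb {..<n} (\<lambda>_. M) J (PiE J X)"
  let ?P = "\<lambda>J X. (J \<noteq> {} \<or> {..<n} = ({}::nat set)) \<and> finite J \<and> J \<subseteq> {..<n} \<and> X \<in> (\<Pi> j\<in>J. sets M)"
  let ?\<mu> = "\<lambda>J X. \<Prod>j\<in>J \<union> {i\<in>{..<n}. emeasure M (space M) \<noteq> 1}.
                   if j \<in> J then emeasure M (X j) else emeasure M (space M)"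
  define ext where "ext J X i = (if i \<in> J then X i else space M)"
    for J :: "nat set" and X :: "nat \<Rightarrow> 'a set" and i
  have ext_sets: "ext J X i \<in> sets M" if "?P J X" for J X i
    using that by (auto simp: ext_def)
  have G_eq: "?G J X = PiE {..<n} (ext J X)" if "?P J X" for J X
    using that unfolding ext_def by (intro PiM_generator_eq_PiE) auto
  have \<mu>_eq: "?\<mu> J X = (\<Prod>i<n. emeasure M (ext J X i))" if "?P J X" for J X
    using that unfolding ext_def by (intro PiM_premeasure_eq_prod) auto
  have "emeasure (PiM {..<n} (\<lambda>_. M)) (?G {..<n} A) = ?\<mu> {..<n} A"
  proof (rule extend_measure_caratheodory_pair[OF PiM_def])
    show "?P {..<n} A"
      using False A by auto
    show "semiring_of_sets (PiE {..<n} (\<lambda>_. space M)) {?G J X | J X. ?P J X}"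
      using semiring_of_sets_rectangles[of n M] False by (simp add: rectangles_eq_PiM_generators)
  next
    fix J X assume P: "?P J X" and empty: "?G J X = {}"
    from empty show "?\<mu> J X = 0"
      unfolding G_eq[OF P] \<mu>_eq[OF P] by (rule prod_emeasure_eq_0_if_PiE_empty)
  next
    fix J X K Y assume P: "?P J X" and Q: "?P K Y" and eq: "?G J X = ?G K Y"
    from eq show "?\<mu> J X = ?\<mu> K Y"
      unfolding G_eq[OF P] G_eq[OF Q] \<mu>_eq[OF P] \<mu>_eq[OF Q] by (rule prod_emeasure_cong_PiE)
  next
    fix J X assume "?P J X" then show "0 \<le> ?\<mu> J X" by simp
  next
    fix Js :: "nat \<Rightarrow> nat set" and Xs :: "nat \<Rightarrow> nat \<Rightarrow> 'a set" and J X
    assume P: "\<And>m. ?P (Js m) (Xs m)" and PJ: "?P J X"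
      and "disjoint_family (\<lambda>m. ?G (Js m) (Xs m))" and "(\<Union>m. ?G (Js m) (Xs m)) = ?G J X"
    then have "disjoint_family (\<lambda>m. PiE {..<n} (ext (Js m) (Xs m)))"
      and "(\<Union>m. PiE {..<n} (ext (Js m) (Xs m))) = PiE {..<n} (ext J X)"
      by (simp_all add: G_eq)
    then show "(\<Sum>m. ?\<mu> (Js m) (Xs m)) = ?\<mu> J X"
      unfolding \<mu>_eq[OF P] \<mu>_eq[OF PJ]
      by (rule suminf_emeasure_rectangles[OF ext_sets[OF P] ext_sets[OF PJ]])
  qed
  moreover have "?G {..<n} A = PiE {..<n} A"
    using A sets.sets_into_space by (intro prod_emb_PiE_same_index) auto
  moreover have "?\<mu> {..<n} A = (\<Prod>i<n. emeasure M (A i))"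
    using False A by (subst \<mu>_eq) (auto simp: ext_def)
  ultimately show ?thesis by simp
qed

lemma nn_integral_comp_mult_eq:
  fixes c :: ennreal
  assumes f: "f \<in> N \<rightarrow>\<^sub>M M" and R: "R \<in> borel_measurable N"
    and sets: "\<And>A. A \<in> sets M \<Longrightarrow> (\<integral>\<^sup>+x. indicator A (f x) * R x \<partial>N) = emeasure M A * c"
    and u: "u \<in> borel_measurable M"
  shows "(\<integral>\<^sup>+x. u (f x) * R x \<partial>N) = (\<integral>\<^sup>+t. u t \<partial>M) * c"
proof -
  let ?D = "distr (density N R) M f"
  have f': "f \<in> density N R \<rightarrow>\<^sub>M M"
    using f by simp
  have "?D = scale_measure c M"
  proof (rule measure_eqI)
    fix A assume "A \<in> sets ?D"
    then have A: "A \<in> sets M" by simp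
    have "emeasure ?D A = (\<integral>\<^sup>+x. R x * indicator (f -` A \<inter> space N) x \<partial>N)"
      using f f' A R by (simp add: emeasure_distr emeasure_density measurable_sets)
    also have "\<dots> = (\<integral>\<^sup>+x. indicator A (f x) * R x \<partial>N)"
      by (intro nn_integral_cong) (simp add: indicator_def)
    finally show "emeasure ?D A = emeasure (scale_measure c M) A"
      using sets[OF A] by (simp add: mult.commute)
  qed simp
  have "(\<integral>\<^sup>+x. u (f x) * R x \<partial>N) = (\<integral>\<^sup>+x. u (f x) \<partial>density N R)"
    using R measurable_compose[OF f u] by (simp add: nn_integral_density mult.commute)
  also have "\<dots> = (\<integral>\<^sup>+t. u t \<partial>?D)"
    using f' u by (simp add: nn_integral_distr)
  also have "\<dots> = (\<integral>\<^sup>+t. u t \<partial>M) * c"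
    using u by (simp add: \<open>?D = scale_measure c M\<close> nn_integral_scale_measure mult.commute)
  finally show ?thesis .
qed

lemma nn_integral_PiM_prod_indicator:
  fixes n :: nat
  assumes A: "\<And>i. i < n \<Longrightarrow> A i \<in> sets M"
  shows "(\<integral>\<^sup>+x. (\<Prod>i<n. indicator (A i) (x i)) \<partial>PiM {..<n} (\<lambda>_. M)) = (\<Prod>i<n. emeasure M (A i))"
proof -
  let ?N = "PiM {..<n} (\<lambda>_. M)"
  have "(\<integral>\<^sup>+x. (\<Prod>i<n. indicator (A i) (x i)) \<partial>?N) = (\<integral>\<^sup>+x. indicator (PiE {..<n} A) x \<partial>?N)"
  proof (rule nn_integral_cong)
    fix x assume "x \<in> space ?N"
    then have "restrict x {..<n} = x"
      by (simp add: space_PiM PiE_def extensional_restrict)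
    moreover have "indicator (PiE {..<n} A) (restrict x {..<n}) = (\<Prod>i<n. indicator (A i) (x i) :: ennreal)"
      by (simp add: indicator_PiE_restrict)
    ultimately show "(\<Prod>i<n. indicator (A i) (x i)) = (indicator (PiE {..<n} A) x :: ennreal)"
      by simp
  qed
  also have "\<dots> = (\<Prod>i<n. emeasure M (A i))"
    using A by (subst nn_integral_indicator) (auto intro: sets_PiM_I_finite emeasure_PiM_PiE)
  finally show ?thesis .
qed

lemma nn_integral_PiM_prod_measurable_factor:
  fixes g :: "nat \<Rightarrow> 'a \<Rightarrow> ennreal" and n :: nat
  assumes "k < n" and g: "\<And>i. i < n \<Longrightarrow> g i \<in> borel_measurable M"
    and indicator: "\<And>A. A \<in> sets M \<Longrightarrow>
      (\<integral>\<^sup>+x. (\<Prod>i<n. (g(k := indicator A)) i (x i)) \<partial>PiM {..<n} (\<lambda>_. M))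
        = (\<Prod>i<n. \<integral>\<^sup>+t. (g(k := indicator A)) i t \<partial>M)"
  shows "(\<integral>\<^sup>+x. (\<Prod>i<n. g i (x i)) \<partial>PiM {..<n} (\<lambda>_. M)) = (\<Prod>i<n. \<integral>\<^sup>+t. g i t \<partial>M)"
proof -
  let ?N = "PiM {..<n} (\<lambda>_. M)"
  let ?R = "\<lambda>x. \<Prod>i\<in>{..<n}-{k}. g i (x i)"
  let ?c = "\<Prod>i\<in>{..<n}-{k}. \<integral>\<^sup>+t. g i t \<partial>M"
  have split: "(\<Prod>i<n. h i) = h k * (\<Prod>i\<in>{..<n}-{k}. h i)" for h :: "nat \<Rightarrow> ennreal"
    using \<open>k < n\<close> by (subst prod.remove[of _ k]) auto
  have R_upd: "(\<Prod>i\<in>{..<n}-{k}. (g(k := h)) i (x i)) = ?R x" for h x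
    by (intro prod.cong) auto
  have c_upd: "(\<Prod>i\<in>{..<n}-{k}. \<integral>\<^sup>+t. (g(k := h)) i t \<partial>M) = ?c" for h
    by (intro prod.cong) auto
  have "(\<integral>\<^sup>+x. g k (x k) * ?R x \<partial>?N) = (\<integral>\<^sup>+t. g k t \<partial>M) * ?c"
  proof (rule nn_integral_comp_mult_eq)
    show "(\<lambda>x. x k) \<in> ?N \<rightarrow>\<^sub>M M"
      using \<open>k < n\<close> by simp
    show "?R \<in> borel_measurable ?N"
      using g by measurable
    show "g k \<in> borel_measurable M"
      using g \<open>k < n\<close> .
  next
    fix A assume A: "A \<in> sets M"
    from indicator[OF A] show "(\<integral>\<^sup>+x. indicator A (x k) * ?R x \<partial>?N) = emeasure M A * ?c"
      by (simp only: split fun_upd_same R_upd c_upd nn_integral_indicator[OF A])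
  qed
  then show ?thesis
    by (simp only: split)
qed

lemma nn_integral_PiM_prod:
  fixes g :: "nat \<Rightarrow> 'a \<Rightarrow> ennreal" and n :: nat
  assumes g: "\<And>i. i < n \<Longrightarrow> g i \<in> borel_measurable M"
  shows "(\<integral>\<^sup>+x. (\<Prod>i<n. g i (x i)) \<partial>PiM {..<n} (\<lambda>_. M)) = (\<Prod>i<n. \<integral>\<^sup>+t. g i t \<partial>M)"
proof -
  \<comment> \<open>Induction on the number of leading factors that are not yet known to be indicators.\<close>
  have "(\<integral>\<^sup>+x. (\<Prod>i<n. g i (x i)) \<partial>PiM {..<n} (\<lambda>_. M)) = (\<Prod>i<n. \<integral>\<^sup>+t. g i t \<partial>M)"
    if "\<And>i. i < n \<Longrightarrow> g i \<in> borel_measurable M"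
      and "\<And>i. k \<le> i \<Longrightarrow> i < n \<Longrightarrow> \<exists>A\<in>sets M. g i = indicator A" for k g
    using that
  proof (induction k arbitrary: g)
    case 0
    then have "\<forall>i. \<exists>A. i < n \<longrightarrow> A \<in> sets M \<and> g i = indicator A"
      by blast
    then obtain A where A: "\<And>i. i < n \<Longrightarrow> A i \<in> sets M \<and> g i = indicator (A i)"
      by metis
    have "(\<Prod>i<n. g i (x i)) = (\<Prod>i<n. indicator (A i) (x i))" for x
      using A by (intro prod.cong) auto
    moreover have "(\<Prod>i<n. \<integral>\<^sup>+t. g i t \<partial>M) = (\<Prod>i<n. emeasure M (A i))"
      using A by (intro prod.cong) auto
    ultimately show ?case
      using A by (simp add: nn_integral_PiM_prod_indicator)
  next
    case (Suc k)
    show ?case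
    proof (cases "k < n")
      case True
      show ?thesis
      proof (rule nn_integral_PiM_prod_measurable_factor[OF True Suc.prems(1)])
        fix A assume A: "A \<in> sets M"
        have "(g(k := indicator A)) i \<in> borel_measurable M" if "i < n" for i
          using Suc.prems(1)[OF that] A by simp
        moreover have "\<exists>B\<in>sets M. (g(k := indicator A)) i = indicator B" if "k \<le> i" "i < n" for i
          using Suc.prems(2)[of i] A that by (cases "i = k") auto
        ultimately show "(\<integral>\<^sup>+x. (\<Prod>i<n. (g(k := indicator A)) i (x i)) \<partial>PiM {..<n} (\<lambda>_. M))
            = (\<Prod>i<n. \<integral>\<^sup>+t. (g(k := indicator A)) i t \<partial>M)"
          by (rule Suc.IH)
      qed
    next
      case False
      then show ?thesis
        by (intro Suc.IH[OF Suc.prems(1)]) auto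
    qed
  qed
  from this[of g n] g show ?thesis
    by simp
qed

section \<open>Weights of words\<close>

lemma borel_measurable_vec_nth [measurable]:
  fixes f :: "'a \<Rightarrow> 'b::real_normed_vector^'n"
  assumes "f \<in> borel_measurable M"
  shows "(\<lambda>x. f x $ i) \<in> borel_measurable M"
proof -
  have "continuous_on UNIV (\<lambda>v::'b^'n. v $ i)"
    by (intro continuous_on_component continuous_on_id)
  from measurable_compose[OF assms borel_measurable_continuous_onI[OF this]] show ?thesis .
qed

lemma borel_measurable_psi_word_entry:
  fixes \<Psi> :: "'a \<Rightarrow> real^'q::finite^'q"
  assumes \<Psi>: "\<Psi> \<in> borel_measurable M" and "set is \<subseteq> I"
  shows "(\<lambda>w. psi_word \<Psi> (map w is) $ i $ j) \<in> borel_measurable (PiM I (\<lambda>_. M))"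
  using assms(2)
proof (induction "is" arbitrary: i)
  case Nil
  then show ?case by simp
next
  case (Cons k "is")
  have "k \<in> I"
    using Cons.prems by simp
  then have "(\<lambda>w. \<Psi> (w k) $ i $ l) \<in> borel_measurable (PiM I (\<lambda>_. M))" for l
    using \<Psi> by measurable
  with Cons show ?case
    by (simp add: matrix_matrix_mult_def)
qed

lemma psi_word_nonneg:
  assumes "\<And>x i j. 0 \<le> \<Psi> x $ i $ j"
  shows "0 \<le> psi_word \<Psi> xs $ i $ j"
  using assms by (induction xs arbitrary: i) (auto simp: matrix_matrix_mult_def mat_def intro!: sum_nonneg)

definition entry_sum :: "real^'n^'m \<Rightarrow> real" where
  "entry_sum A = (\<Sum>i\<in>UNIV. \<Sum>j\<in>UNIV. A $ i $ j)"

lemma entry_sum_nonneg: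
  "(\<And>i j. 0 \<le> A $ i $ j) \<Longrightarrow> 0 \<le> entry_sum A"
  unfolding entry_sum_def by (intro sum_nonneg) auto

lemma entry_le_entry_sum:
  fixes A :: "real^'n::finite^'m::finite"
  assumes A: "\<And>i j. 0 \<le> A $ i $ j"
  shows "A $ i $ j \<le> entry_sum A"
proof -
  have "A $ i $ j \<le> (\<Sum>j\<in>UNIV. A $ i $ j)"
    using A by (intro member_le_sum) auto
  also have "\<dots> \<le> entry_sum A"
    unfolding entry_sum_def using A
    by (intro member_le_sum[where f = "\<lambda>i. \<Sum>j\<in>UNIV. A $ i $ j"] sum_nonneg) auto
  finally show ?thesis .
qed

lemma entry_sum_matrix_mult_le:
  fixes A :: "real^'k::finite^'m::finite" and B :: "real^'n::finite^'k"
  assumes A: "\<And>i j. 0 \<le> A $ i $ j" and B: "\<And>i j. 0 \<le> B $ i $ j"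
  shows "entry_sum (A ** B) \<le> entry_sum A * entry_sum B"
proof -
  have row_le: "(\<Sum>j\<in>UNIV. B $ l $ j) \<le> entry_sum B" for l
    unfolding entry_sum_def using B
    by (intro member_le_sum[where f = "\<lambda>i. \<Sum>j\<in>UNIV. B $ i $ j"] sum_nonneg) auto
  have "entry_sum (A ** B) = (\<Sum>i\<in>UNIV. \<Sum>l\<in>UNIV. A $ i $ l * (\<Sum>j\<in>UNIV. B $ l $ j))"
    unfolding entry_sum_def matrix_matrix_mult_def
    by (simp add: sum_distrib_left sum.swap[of _ "UNIV :: 'n set"])
  also have "\<dots> \<le> (\<Sum>i\<in>UNIV. \<Sum>l\<in>UNIV. A $ i $ l * entry_sum B)"
    using A row_le by (intro sum_mono mult_left_mono) auto
  also have "\<dots> = entry_sum A * entry_sum B"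
    unfolding entry_sum_def by (simp add: sum_distrib_right)
  finally show ?thesis .
qed

lemma entry_sum_psi_word_le:
  fixes \<Psi> :: "'a \<Rightarrow> real^'q::finite^'q"
  assumes nonneg: "\<And>x i j. 0 \<le> \<Psi> x $ i $ j"
  shows "entry_sum (psi_word \<Psi> xs) \<le> real CARD('q) * (\<Prod>x\<leftarrow>xs. entry_sum (\<Psi> x))"
proof (induction xs)
  case Nil
  then show ?case
    by (simp add: entry_sum_def mat_def if_distrib sum.delta)
next
  case (Cons x xs)
  have "entry_sum (psi_word \<Psi> (x # xs)) \<le> entry_sum (\<Psi> x) * entry_sum (psi_word \<Psi> xs)"
    using nonneg psi_word_nonneg[of \<Psi>, OF nonneg] by (simp add: entry_sum_matrix_mult_le)
  also have "\<dots> \<le> entry_sum (\<Psi> x) * (real CARD('q) * (\<Prod>x\<leftarrow>xs. entry_sum (\<Psi> x)))"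
    using Cons.IH nonneg by (intro mult_left_mono entry_sum_nonneg)
  finally show ?case
    by (simp add: ac_simps)
qed

lemma integrable_psi_word_entry:
  fixes \<Psi> :: "'a \<Rightarrow> real^'q::finite^'q" and n :: nat
  assumes \<Psi>: "\<Psi> \<in> borel_measurable M" and nonneg: "\<And>x i j. 0 \<le> \<Psi> x $ i $ j"
    and integrable: "\<And>i j. integrable M (\<lambda>x. \<Psi> x $ i $ j)"
  shows "integrable (PiM {..<n} (\<lambda>_. M)) (\<lambda>w. psi_word \<Psi> (map w [0..<n]) $ i $ j)"
proof (rule integrableI_bounded)
  let ?N = "PiM {..<n} (\<lambda>_. M)"
  let ?s = "\<lambda>x. entry_sum (\<Psi> x)"
  have s_nonneg: "0 \<le> ?s x" for x
    using nonneg by (rule entry_sum_nonneg)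
  have "integrable M ?s"
    unfolding entry_sum_def using integrable by auto
  then have s_measurable: "?s \<in> borel_measurable M" and s_finite: "(\<integral>\<^sup>+t. ennreal (?s t) \<partial>M) < \<infinity>"
    using s_nonneg by (auto simp: integrable_iff_bounded)
  show "(\<lambda>w. psi_word \<Psi> (map w [0..<n]) $ i $ j) \<in> borel_measurable ?N"
    using \<Psi> by (rule borel_measurable_psi_word_entry) auto
  have "(\<integral>\<^sup>+w. ennreal (norm (psi_word \<Psi> (map w [0..<n]) $ i $ j)) \<partial>?N)
      \<le> (\<integral>\<^sup>+w. ennreal (real CARD('q)) * (\<Prod>k<n. ennreal (?s (w k))) \<partial>?N)"
  proof (rule nn_integral_mono)
    fix w :: "nat \<Rightarrow> 'a"
    have "norm (psi_word \<Psi> (map w [0..<n]) $ i $ j) \<le> entry_sum (psi_word \<Psi> (map w [0..<n]))"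
      using psi_word_nonneg[of \<Psi>, OF nonneg] by (simp add: entry_le_entry_sum)
    also have "\<dots> \<le> real CARD('q) * (\<Prod>k<n. ?s (w k))"
      using entry_sum_psi_word_le[of \<Psi> "map w [0..<n]", OF nonneg]
      by (simp add: prod.distinct_set_conv_list[symmetric] atLeast0LessThan)
    finally show "ennreal (norm (psi_word \<Psi> (map w [0..<n]) $ i $ j))
        \<le> ennreal (real CARD('q)) * (\<Prod>k<n. ennreal (?s (w k)))"
      using s_nonneg by (simp add: ennreal_mult[symmetric] prod_ennreal prod_nonneg ennreal_leI)
  qed
  also have "\<dots> = ennreal (real CARD('q)) * (\<Prod>k<n. \<integral>\<^sup>+t. ennreal (?s t) \<partial>M)"
    using s_measurable
    by (simp add: nn_integral_cmult nn_integral_PiM_prod[of n "\<lambda>_ t. ennreal (?s t)", simplified])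
  also have "\<dots> < \<infinity>"
    using s_finite by (simp add: ennreal_mult_less_top power_less_top_ennreal)
  finally show "(\<integral>\<^sup>+w. ennreal (norm (psi_word \<Psi> (map w [0..<n]) $ i $ j)) \<partial>?N) < \<infinity>" .
qed

definition word_weight :: "('a \<Rightarrow> real^'q::finite^'q) \<Rightarrow> real^'q \<Rightarrow> 'a list \<Rightarrow> real" where
  "word_weight \<Psi> \<sigma> xs = (\<sigma> v* psi_word \<Psi> xs) \<bullet> ones"

lemma inner_vector_matrix_ones:
  fixes \<sigma> :: "real^'m::finite" and A :: "real^'n::finite^'m"
  shows "(\<sigma> v* A) \<bullet> ones = (\<Sum>i\<in>UNIV. \<Sum>j\<in>UNIV. \<sigma> $ i * A $ i $ j)"
  by (simp add: inner_vec_def vector_matrix_mult_def ones_def sum.swap[of _ "UNIV :: 'n set"])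

lemma word_weight_uminus: "word_weight \<Psi> (- \<sigma>) xs = - word_weight \<Psi> \<sigma> xs"
  by (simp add: word_weight_def inner_vector_matrix_ones sum_negf)

lemma integrable_word_weight:
  fixes \<Psi> :: "'a \<Rightarrow> real^'q::finite^'q"
  assumes \<Psi>: "\<Psi> \<in> borel_measurable M" and nonneg: "\<And>x i j. 0 \<le> \<Psi> x $ i $ j"
    and integrable: "\<And>i j. integrable M (\<lambda>x. \<Psi> x $ i $ j)"
  shows "integrable (prod_meas M n) (\<lambda>w. word_weight \<Psi> \<sigma> (map w [0..<n]))"
  unfolding word_weight_def inner_vector_matrix_ones
  using integrable_psi_word_entry[OF assms] by auto

lemma set_integral_word_weight:
  fixes \<Psi> :: "'a \<Rightarrow> real^'q::finite^'q"
  assumes \<Psi>: "\<Psi> \<in> borel_measurable M" and nonneg: "\<And>x i j. 0 \<le> \<Psi> x $ i $ j"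
    and integrable: "\<And>i j. integrable M (\<lambda>x. \<Psi> x $ i $ j)"
    and E: "E \<in> sets (prod_meas M n)"
  shows "(\<sigma> v* word_integral M \<Psi> n E) \<bullet> ones = (LINT w:E|prod_meas M n. word_weight \<Psi> \<sigma> (map w [0..<n]))"
proof -
  have "integrable (prod_meas M n) (\<lambda>w. indicator E w * psi_word \<Psi> (map w [0..<n]) $ i $ j)"
    for i j
    using integrable_real_mult_indicator[OF E integrable_psi_word_entry[OF \<Psi> nonneg integrable]]
    by (simp add: mult.commute)
  then have "integrable (prod_meas M n)
      (\<lambda>w. \<sigma> $ i * (indicator E w * psi_word \<Psi> (map w [0..<n]) $ i $ j))" for i j
    by (rule integrable_mult_right)
  then show ?thesis
    unfolding word_integral_def word_weight_def inner_vector_matrix_ones set_lebesgue_integral_def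
    by (simp add: sum_distrib_left mult.left_commute)
qed

lemma hmm_equiv_iff_set_integrals_eq_0:
  fixes \<Psi> :: "'a \<Rightarrow> real^'q::finite^'q"
  assumes \<Psi>: "\<Psi> \<in> borel_measurable M" and nonneg: "\<And>x i j. 0 \<le> \<Psi> x $ i $ j"
    and integrable: "\<And>i j. integrable M (\<lambda>x. \<Psi> x $ i $ j)"
  shows "hmm_equiv M \<Psi> \<pi>1 \<pi>2 \<longleftrightarrow>
    (\<forall>n. \<forall>E\<in>sets (prod_meas M n). (LINT w:E|prod_meas M n. word_weight \<Psi> (\<pi>1 - \<pi>2) (map w [0..<n])) = 0)"
proof -
  have "(\<pi>1 v* word_integral M \<Psi> n E) \<bullet> ones = (\<pi>2 v* word_integral M \<Psi> n E) \<bullet> ones \<longleftrightarrow>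
      (LINT w:E|prod_meas M n. word_weight \<Psi> (\<pi>1 - \<pi>2) (map w [0..<n])) = 0"
    if "E \<in> sets (prod_meas M n)" for n E
    by (simp add: set_integral_word_weight[OF assms that, symmetric]
        vector_matrix_mult_diff_distrib inner_diff_left)
  then show ?thesis
    unfolding hmm_equiv_def by blast
qed

lemma orthogonal_span_iff_word_weight_eq_0:
  "(\<forall>v \<in> span {psi_word \<Psi> w *v ones | w. True}. orthogonal \<sigma> v) \<longleftrightarrow> (\<forall>ws. word_weight \<Psi> \<sigma> ws = 0)"
proof -
  have weight: "orthogonal \<sigma> (psi_word \<Psi> ws *v ones) \<longleftrightarrow> word_weight \<Psi> \<sigma> ws = 0" for ws
    by (simp add: orthogonal_def word_weight_def dot_lmul_matrix)
  show ?thesis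
  proof
    assume orth: "\<forall>v \<in> span {psi_word \<Psi> w *v ones | w. True}. orthogonal \<sigma> v"
    show "\<forall>ws. word_weight \<Psi> \<sigma> ws = 0"
    proof
      fix ws
      have "psi_word \<Psi> ws *v ones \<in> span {psi_word \<Psi> w *v ones | w. True}"
        by (rule span_base) blast
      with orth weight show "word_weight \<Psi> \<sigma> ws = 0" by blast
    qed
  next
    assume "\<forall>ws. word_weight \<Psi> \<sigma> ws = 0"
    with weight show "\<forall>v \<in> span {psi_word \<Psi> w *v ones | w. True}. orthogonal \<sigma> v"
      by (auto intro: orthogonal_to_span)
  qed
qed

section \<open>Positivity of weights near a word\<close>

lemma continuous_on_matrix_mult [continuous_intros]:
  fixes f :: "'a::topological_space \<Rightarrow> real^'k::finite^'m::finite" and g :: "'a \<Rightarrow> real^'n::finite^'k"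
  assumes "continuous_on S f" and "continuous_on S g"
  shows "continuous_on S (\<lambda>x. f x ** g x)"
  unfolding matrix_matrix_mult_def
  by (intro continuous_on_vec_lambda continuous_on_sum continuous_on_mult continuous_on_component assms)

lemma approximating_set_meets_open:
  assumes approx: "\<And>x. x \<notin> C \<Longrightarrow> \<exists>s::nat \<Rightarrow> 'a. (\<forall>n. s n \<in> C) \<and> (\<lambda>n. \<Psi> (s n)) \<longlonglongrightarrow> \<Psi> x"
    and W: "open W" "\<Psi> x \<in> W"
  shows "\<exists>c\<in>C. \<Psi> c \<in> W"
proof (cases "x \<in> C")
  case True
  with W show ?thesis by blast
next
  case False
  then obtain s where s: "\<forall>n. s n \<in> C" "(\<lambda>n. \<Psi> (s n)) \<longlonglongrightarrow> \<Psi> x"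
    using approx by blast
  then have "eventually (\<lambda>n. \<Psi> (s n) \<in> W) sequentially"
    using W by (intro topological_tendstoD)
  then obtain N where "\<forall>n\<ge>N. \<Psi> (s n) \<in> W"
    unfolding eventually_sequentially by blast
  with s show ?thesis by blast
qed

text \<open>The letter \<open>x\<close> is first replaced by a point \<open>c\<close> of the continuity set \<open>C\<close> of \<open>\<Psi>\<close> with
  \<open>L ** \<Psi> c \<in> V\<close>; near \<open>(L, c)\<close> the map \<open>(L', z) \<mapsto> L' ** \<Psi> z\<close> is jointly continuous.\<close>

lemma open_neighbourhoods_mult_letter:
  fixes \<Psi> :: "'a::topological_space \<Rightarrow> real^'q::finite^'q" and L :: "real^'q^'m::finite"
  assumes "piecewise_continuous \<Psi>" and V: "open V" "L ** \<Psi> x \<in> V"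
  obtains V' S where "open V'" "L \<in> V'" "open S" "S \<noteq> {}"
    and "\<And>L' z. L' \<in> V' \<Longrightarrow> z \<in> S \<Longrightarrow> L' ** \<Psi> z \<in> V"
proof -
  obtain C where C: "open C" "continuous_on C \<Psi>"
    and approx: "\<And>x. x \<notin> C \<Longrightarrow> \<exists>s::nat \<Rightarrow> 'a. (\<forall>n. s n \<in> C) \<and> (\<lambda>n. \<Psi> (s n)) \<longlonglongrightarrow> \<Psi> x"
    using assms(1) unfolding piecewise_continuous_def by metis
  have "continuous_on UNIV (\<lambda>A. L ** A)"
    by (intro continuous_on_matrix_mult continuous_on_const continuous_on_id)
  from continuous_on_open_vimage[THEN iffD1, OF open_UNIV this, rule_format, OF V(1)]
  have "open ((\<lambda>A. L ** A) -` V)" by simp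
  then obtain c where c: "c \<in> C" "L ** \<Psi> c \<in> V"
    using approximating_set_meets_open[OF approx, of "(\<lambda>A. L ** A) -` V" x] V(2) by auto
  have "continuous_on (UNIV \<times> C) (\<lambda>p. \<Psi> (snd p))"
    by (rule continuous_on_compose2[OF C(2) continuous_on_snd[OF continuous_on_id]]) auto
  then have "continuous_on (UNIV \<times> C) (\<lambda>p. fst p ** \<Psi> (snd p))"
    by (intro continuous_on_matrix_mult continuous_on_fst continuous_on_id)
  from continuous_on_open_vimage[THEN iffD1, OF open_Times[OF open_UNIV C(1)] this, rule_format, OF V(1)]
  have "open ((\<lambda>p. fst p ** \<Psi> (snd p)) -` V \<inter> UNIV \<times> C)" .
  moreover have "(L, c) \<in> (\<lambda>p. fst p ** \<Psi> (snd p)) -` V \<inter> UNIV \<times> C"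
    using c by simp
  ultimately obtain V' S where "open V'" "open S" "(L, c) \<in> V' \<times> S"
    and VS: "V' \<times> S \<subseteq> (\<lambda>p. fst p ** \<Psi> (snd p)) -` V \<inter> UNIV \<times> C"
    by (rule open_prod_elim)
  moreover have "L' ** \<Psi> z \<in> V" if "L' \<in> V'" "z \<in> S" for L' z
    using VS that by auto
  ultimately show ?thesis
    using that by blast
qed

lemma psi_word_in_open_near:
  fixes \<Psi> :: "'a::topological_space \<Rightarrow> real^'q::finite^'q" and L :: "real^'q^'m::finite"
  assumes "piecewise_continuous \<Psi>" and P: "open P" and "L ** psi_word \<Psi> xs \<in> P"
  shows "\<exists>V Us. open V \<and> L \<in> V \<and> length Us = length xs \<and> (\<forall>U\<in>set Us. open U \<and> U \<noteq> {}) \<and>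
           (\<forall>L'\<in>V. \<forall>zs. list_all2 (\<in>) zs Us \<longrightarrow> L' ** psi_word \<Psi> zs \<in> P)"
  using assms(3)
proof (induction xs arbitrary: L)
  case Nil
  then show ?case
    using P by (intro exI[of _ P] exI[of _ "[]"]) auto
next
  case (Cons x xs)
  then have "(L ** \<Psi> x) ** psi_word \<Psi> xs \<in> P"
    by (simp add: matrix_mul_assoc)
  from Cons.IH[OF this] obtain V Us where V: "open V" "L ** \<Psi> x \<in> V"
    and Us: "length Us = length xs" "\<forall>U\<in>set Us. open U \<and> U \<noteq> {}"
    and good: "\<forall>L'\<in>V. \<forall>zs. list_all2 (\<in>) zs Us \<longrightarrow> L' ** psi_word \<Psi> zs \<in> P"
    by blast
  obtain V' S where V': "open V'" "L \<in> V'" and S: "open S" "S \<noteq> {}"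
    and VS: "\<And>L' z. L' \<in> V' \<Longrightarrow> z \<in> S \<Longrightarrow> L' ** \<Psi> z \<in> V"
    using open_neighbourhoods_mult_letter[OF assms(1) V] by blast
  have "L' ** psi_word \<Psi> (z # zs') \<in> P"
    if "L' \<in> V'" "z \<in> S" "list_all2 (\<in>) zs' Us" for L' z zs'
    using good VS[OF that(1,2)] that(3) by (simp add: matrix_mul_assoc)
  then have "\<forall>L'\<in>V'. \<forall>zs. list_all2 (\<in>) zs (S # Us) \<longrightarrow> L' ** psi_word \<Psi> zs \<in> P"
    by (auto simp: list_all2_Cons2)
  with V' S Us show ?case
    by (intro exI[of _ V'] exI[of _ "S # Us"]) simp
qed

lemma word_weight_pos_on_open_rectangle:
  fixes \<Psi> :: "'a::topological_space \<Rightarrow> real^'q::finite^'q"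
  assumes "piecewise_continuous \<Psi>" and "word_weight \<Psi> \<sigma> xs > 0"
  obtains U where "\<And>k. k < length xs \<Longrightarrow> open (U k) \<and> U k \<noteq> {}"
    and "\<And>w. w \<in> PiE {..<length xs} U \<Longrightarrow> word_weight \<Psi> \<sigma> (map w [0..<length xs]) > 0"
proof -
  let ?P = "{A :: real^'q^'q. 0 < (\<sigma> v* A) \<bullet> ones}"
  have "continuous_on UNIV (\<lambda>A :: real^'q^'q. \<Sum>i\<in>UNIV. \<Sum>j\<in>UNIV. \<sigma> $ i * A $ i $ j)"
    by (intro continuous_on_sum continuous_on_mult continuous_on_const continuous_on_component
        continuous_on_id)
  then have "open ?P"
    unfolding inner_vector_matrix_ones by (intro open_Collect_less continuous_on_const)
  moreover have "mat 1 ** psi_word \<Psi> xs \<in> ?P"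
    using assms(2) by (simp add: word_weight_def)
  ultimately have "\<exists>V Us. open V \<and> mat 1 \<in> V \<and> length Us = length xs \<and> (\<forall>U\<in>set Us. open U \<and> U \<noteq> {}) \<and>
      (\<forall>L'\<in>V. \<forall>zs. list_all2 (\<in>) zs Us \<longrightarrow> L' ** psi_word \<Psi> zs \<in> ?P)"
    by (rule psi_word_in_open_near[OF assms(1)])
  then obtain V Us where "mat 1 \<in> V" and Us: "length Us = length xs"
      "\<forall>U\<in>set Us. open U \<and> U \<noteq> {}"
    and near: "\<forall>L'\<in>V. \<forall>zs. list_all2 (\<in>) zs Us \<longrightarrow> L' ** psi_word \<Psi> zs \<in> ?P"
    by blast
  have good: "word_weight \<Psi> \<sigma> zs > 0" if "list_all2 (\<in>) zs Us" for zs
    using near \<open>mat 1 \<in> V\<close> that unfolding word_weight_def by fastforce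
  show ?thesis
  proof
    show "open (Us ! k) \<and> Us ! k \<noteq> {}" if "k < length xs" for k
      using Us nth_mem[of k Us] that by simp
    show "word_weight \<Psi> \<sigma> (map w [0..<length xs]) > 0" if "w \<in> PiE {..<length xs} ((!) Us)" for w
    proof (rule good)
      show "list_all2 (\<in>) (map w [0..<length xs]) Us"
        using that Us(1) unfolding list_all2_conv_all_nth PiE_iff by simp
    qed
  qed
qed

section \<open>Equivalence of initial distributions\<close>

lemma set_integral_word_weight_nonzero:
  fixes M :: "'a::topological_space measure" and \<Psi> :: "'a \<Rightarrow> real^'q::finite^'q"
  assumes hmm: "is_HMM M \<Psi>" and pos: "word_weight \<Psi> \<sigma> xs > 0"
  shows "\<exists>E\<in>sets (prod_meas M (length xs)).
           (LINT w:E|prod_meas M (length xs). word_weight \<Psi> \<sigma> (map w [0..<length xs])) \<noteq> 0"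
proof -
  let ?n = "length xs"
  let ?N = "prod_meas M ?n"
  have opens: "\<And>U. open U \<Longrightarrow> U \<in> sets M"
    and positive: "\<And>U. open U \<Longrightarrow> U \<noteq> {} \<Longrightarrow> emeasure M U > 0"
    and \<Psi>: "\<Psi> \<in> borel_measurable M" and nonneg: "\<And>x i j. 0 \<le> \<Psi> x $ i $ j"
    and pc: "piecewise_continuous \<Psi>" and integrable: "\<And>i j. integrable M (\<lambda>x. \<Psi> x $ i $ j)"
    using hmm unfolding is_HMM_def admissible_space_def by auto
  obtain U where U: "\<And>k. k < ?n \<Longrightarrow> open (U k) \<and> U k \<noteq> {}"
    and U_pos: "\<And>w. w \<in> PiE {..<?n} U \<Longrightarrow> word_weight \<Psi> \<sigma> (map w [0..<?n]) > 0"
    using word_weight_pos_on_open_rectangle[OF pc pos] by blast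
  let ?E = "PiE {..<?n} U"
  have E: "?E \<in> sets ?N"
    using U opens by (intro sets_PiM_I_finite) auto
  have "emeasure ?N ?E = (\<Prod>k<?n. emeasure M (U k))"
    using U opens by (intro emeasure_PiM_PiE) auto
  also have "\<dots> \<noteq> 0"
  proof -
    have "emeasure M (U k) \<noteq> 0" if "k < ?n" for k
      using positive[of "U k"] U[OF that] by auto
    then show ?thesis
      by (simp add: prod_zero_iff)
  qed
  finally have "?E \<notin> null_sets ?N"
    by (simp add: null_sets_def)
  moreover have "integrable ?N (\<lambda>w. word_weight \<Psi> \<sigma> (map w [0..<?n]))"
    using \<Psi> nonneg integrable by (rule integrable_word_weight)
  moreover have "AE w\<in>?E in ?N. word_weight \<Psi> \<sigma> (map w [0..<?n]) > 0"
    using U_pos by (intro AE_I2 impI)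
  ultimately show ?thesis
    using null_if_pos_func_has_zero_int[OF _ E] E by blast
qed

lemma word_weight_eq_0_if_set_integrals_eq_0:
  fixes M :: "'a::topological_space measure" and \<Psi> :: "'a \<Rightarrow> real^'q::finite^'q"
  assumes hmm: "is_HMM M \<Psi>"
    and vanish: "\<forall>n. \<forall>E\<in>sets (prod_meas M n).
                   (LINT w:E|prod_meas M n. word_weight \<Psi> \<sigma> (map w [0..<n])) = 0"
  shows "word_weight \<Psi> \<sigma> xs = 0"
proof -
  have not_pos: "\<not> word_weight \<Psi> \<tau> xs > 0"
    if "\<forall>n. \<forall>E\<in>sets (prod_meas M n). (LINT w:E|prod_meas M n. word_weight \<Psi> \<tau> (map w [0..<n])) = 0"
    for \<tau>
    using set_integral_word_weight_nonzero[OF hmm, of \<tau> xs] that by auto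
  have "\<forall>n. \<forall>E\<in>sets (prod_meas M n). (LINT w:E|prod_meas M n. word_weight \<Psi> (- \<sigma>) (map w [0..<n])) = 0"
    using vanish by (simp add: word_weight_uminus set_lebesgue_integral_def)
  from not_pos[OF vanish] not_pos[OF this] show ?thesis
    unfolding word_weight_uminus by linarith
qed

theorem proposition7:
  fixes M :: "'a::topological_space measure"
    and \<Psi> :: "'a \<Rightarrow> real^'q::finite^'q"
    and \<pi>1 \<pi>2 :: "real^'q"
  assumes "is_HMM M \<Psi>"
  shows "hmm_equiv M \<Psi> \<pi>1 \<pi>2 \<longleftrightarrow>
         (\<forall>v \<in> span {psi_word \<Psi> w *v ones | w. True}. orthogonal (\<pi>1 - \<pi>2) v)"
proof -
  have "\<Psi> \<in> borel_measurable M" and "\<And>x i j. 0 \<le> \<Psi> x $ i $ j"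
    and "\<And>i j. integrable M (\<lambda>x. \<Psi> x $ i $ j)"
    using assms unfolding is_HMM_def by auto
  note equiv = hmm_equiv_iff_set_integrals_eq_0[OF this]
  show ?thesis
    unfolding equiv orthogonal_span_iff_word_weight_eq_0
  proof
    assume "\<forall>n. \<forall>E\<in>sets (prod_meas M n).
              (LINT w:E|prod_meas M n. word_weight \<Psi> (\<pi>1 - \<pi>2) (map w [0..<n])) = 0"
    then show "\<forall>ws. word_weight \<Psi> (\<pi>1 - \<pi>2) ws = 0"
      by (intro allI) (rule word_weight_eq_0_if_set_integrals_eq_0[OF assms])
  qed simp
qed

end
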